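(* Consider a financial exchange in which a central exchange server generates a stream of market data points and sends them over a network to release buffers, each of which delivers the data to one market participant; participants submit trades, which are sent over the network to an ordering buffer that decides the order $O$ in which trades are forwarded to the matching engine. Assume the network has finite but unbounded message latency. If the trigger points of trades are unknown to the system (the order may depend only on delivery times of market data and submission times of trades), then no ordering system can achieve Response Time Fairness.
   Context: For participant $i$ and data point $x$, $D(i,x)$ is the real time $x$ is delivered to participant $i$. For the $a$-th trade $(i,a)$ of participant $i$, $S(i,a)$ is its submission time, $TP(i,a)$ is the market data point (trigger point) in response to which it was generated, and $RT(i,a) = S(i,a) - D(i,TP(i,a))$ is its response time. $O(i,a) < O(j,b)$ means $(i,a)$ is forwarded to the matching engine before $(j,b)$. An ordering system achieves Response Time Fairness if for all trades $(i,a)$, $(j,b)$: whenever $TP(i,a) = TP(j,b)$ and $RT(i,a) < RT(j,b)$, then $O(i,a) < O(j,b)$. "Finite but unbounded latency" is the standard asynchronous message-passing model: every message is eventually delivered but there is no a priori bound on its delay. *)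

theory Defs
  imports Complex_Main
begin

text \<open>Participants have type 'p; market data points are the stream
  indexed by nat; the a-th trade of participant i is the pair (i, a).
  D i x : real time data point x is delivered to participant i.
  S i a : submission time of trade (i, a).
  TP i a : trigger point of trade (i, a).
  T : the (finite) set of trades that occur.\<close>

type_synonym 'p trade = "'p \<times> nat"

definition resp_time ::
  "('p \<Rightarrow> nat \<Rightarrow> real) \<Rightarrow> ('p \<Rightarrow> nat \<Rightarrow> real) \<Rightarrow> ('p \<Rightarrow> nat \<Rightarrow> nat) \<Rightarrow> 'p \<Rightarrow> nat \<Rightarrow> real" where
  "resp_time D S TP i a = S i a - D i (TP i a)"

text \<open>Admissible executions under finite but unbounded latency: delivery
  times are arbitrary nonnegative reals, and each trade is submitted after the
  delivery of its trigger point.\<close>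
definition valid_scenario ::
  "'p trade set \<Rightarrow> ('p \<Rightarrow> nat \<Rightarrow> real) \<Rightarrow> ('p \<Rightarrow> nat \<Rightarrow> real) \<Rightarrow> ('p \<Rightarrow> nat \<Rightarrow> nat) \<Rightarrow> bool" where
  "valid_scenario T D S TP \<longleftrightarrow> finite T \<and> (\<forall>i x. 0 \<le> D i x)
     \<and> (\<forall>(i, a) \<in> T. D i (TP i a) < S i a)"

text \<open>Response Time Fairness of the order Rel (Rel t u means t is forwarded before u).\<close>
definition RTF ::
  "'p trade set \<Rightarrow> ('p \<Rightarrow> nat \<Rightarrow> real) \<Rightarrow> ('p \<Rightarrow> nat \<Rightarrow> real) \<Rightarrow> ('p \<Rightarrow> nat \<Rightarrow> nat)
     \<Rightarrow> ('p trade \<Rightarrow> 'p trade \<Rightarrow> bool) \<Rightarrow> bool" where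
  "RTF T D S TP Rel \<longleftrightarrow> (\<forall>(i, a) \<in> T. \<forall>(j, b) \<in> T.
      TP i a = TP j b \<and> resp_time D S TP i a < resp_time D S TP j b \<longrightarrow> Rel (i, a) (j, b))"

text \<open>An ordering system that does not know trigger points: the order it
  produces depends only on the delivery times, the submission times (and the
  set of trades), and it is a strict linear order on the trades.\<close>
definition ordering_system ::
  "(('p \<Rightarrow> nat \<Rightarrow> real) \<Rightarrow> ('p \<Rightarrow> nat \<Rightarrow> real) \<Rightarrow> 'p trade set \<Rightarrow> 'p trade \<Rightarrow> 'p trade \<Rightarrow> bool) \<Rightarrow> bool" where
  "ordering_system Ord \<longleftrightarrow> (\<forall>D S T.
      (\<forall>t\<in>T. \<not> Ord D S T t t)
    \<and> (\<forall>t\<in>T. \<forall>u\<in>T. \<forall>v\<in>T. Ord D S T t u \<longrightarrow> Ord D S T u v \<longrightarrow> Ord D S T t v)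
    \<and> (\<forall>t\<in>T. \<forall>u\<in>T. t \<noteq> u \<longrightarrow> Ord D S T t u \<or> Ord D S T u t))"

end

theory Submission
  imports Defs
begin

text \<open>Two participants \<open>i\<close>, \<open>j\<close> submit one trade each at time 3, where \<open>j\<close>
  receives every data point at time 1 and \<open>i\<close> receives data point \<open>x\<close> at time \<open>2 x\<close>.
  If both trades react to point 0, \<open>j\<close> was faster (2 against 3); if both react to
  point 1, \<open>i\<close> was faster (1 against 2). An order that sees only delivery and
  submission times cannot tell the two cases apart, so it would have to put each
  trade before the other.\<close>

lemma RTF_D:
  assumes "RTF T D S TP Rel" and "(i, a) \<in> T" and "(j, b) \<in> T"
    and "TP i a = TP j b" and "resp_time D S TP i a < resp_time D S TP j b"
  shows "Rel (i, a) (j, b)"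
  using assms unfolding RTF_def by fast

lemma ordering_system_asym:
  assumes "ordering_system Ord" and "t \<in> T" and "u \<in> T" and "Ord D S T t u"
  shows "\<not> Ord D S T u t"
  using assms unfolding ordering_system_def by metis

lemma ordering_system_not_RTF_if_response_order_flips:
  assumes "ordering_system Ord" and "(i, a) \<in> T" and "(j, b) \<in> T"
    and "TP i a = TP j b" and "resp_time D S TP i a < resp_time D S TP j b"
    and "TP' i a = TP' j b" and "resp_time D S TP' j b < resp_time D S TP' i a"
  shows "\<not> (RTF T D S TP (Ord D S T) \<and> RTF T D S TP' (Ord D S T))"
  using assms RTF_D ordering_system_asym by metis

definition staggered_delivery :: "'p \<Rightarrow> 'p \<Rightarrow> nat \<Rightarrow> real" where
  "staggered_delivery i k x = (if k = i then 2 * real x else 1)"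

lemma valid_scenario_staggered_delivery:
  assumes "x \<le> 1"
  shows "valid_scenario {(i, 0), (j, 0)} (staggered_delivery i) (\<lambda>_ _. 3) (\<lambda>_ _. x)"
  using assms unfolding valid_scenario_def staggered_delivery_def by auto

lemma resp_time_staggered_delivery:
  "resp_time (staggered_delivery i) (\<lambda>_ _. 3) (\<lambda>_ _. x) i a = 3 - 2 * real x"
  "j \<noteq> i \<Longrightarrow> resp_time (staggered_delivery i) (\<lambda>_ _. 3) (\<lambda>_ _. x) j a = 2"
  unfolding resp_time_def staggered_delivery_def by simp_all

theorem theorem1:
  fixes Ord :: "('p \<Rightarrow> nat \<Rightarrow> real) \<Rightarrow> ('p \<Rightarrow> nat \<Rightarrow> real) \<Rightarrow> 'p trade set \<Rightarrow> 'p trade \<Rightarrow> 'p trade \<Rightarrow> bool"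
  assumes "\<exists>i j :: 'p. i \<noteq> j"
    and "ordering_system Ord"
  shows "\<not> (\<forall>T D S TP. valid_scenario T D S TP \<longrightarrow> RTF T D S TP (Ord D S T))"
proof
  assume fair: "\<forall>T D S TP. valid_scenario T D S TP \<longrightarrow> RTF T D S TP (Ord D S T)"
  obtain i j :: 'p where "j \<noteq> i" using assms(1) by blast
  let ?T = "{(i, 0), (j, 0)}" and ?D = "staggered_delivery i" and ?S = "\<lambda>_ _. 3 :: real"
  have fair0: "RTF ?T ?D ?S (\<lambda>_ _. 0) (Ord ?D ?S ?T)"
    by (rule fair[rule_format, OF valid_scenario_staggered_delivery[OF le0]])
  have fair1: "RTF ?T ?D ?S (\<lambda>_ _. 1) (Ord ?D ?S ?T)"
    by (rule fair[rule_format, OF valid_scenario_staggered_delivery[OF order_refl]])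
  have "\<not> (RTF ?T ?D ?S (\<lambda>_ _. 0) (Ord ?D ?S ?T) \<and> RTF ?T ?D ?S (\<lambda>_ _. 1) (Ord ?D ?S ?T))"
    by (rule ordering_system_not_RTF_if_response_order_flips[OF assms(2),
          where i = j and a = 0 and j = i and b = 0])
      (simp_all add: resp_time_staggered_delivery \<open>j \<noteq> i\<close>)
  with fair0 fair1 show False by blast
qed

end
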